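(* Let $k\ge 1$, $l=1$, $n=k+1$, $p\in[0,1]$, $q=1-p$. Consider the binning code (the Ni code for $l=1$) whose $2^k$ bins are the pairs $\{x^n,\bar{x}^n\}$, $x^n\in\{0,1\}^n$, where $\bar{x}^n$ is the complement of $x^n$ (all bits flipped). Then its equivocation $H(M\mid Z^n)$ equals $V^*(1,k,p)$, the optimal value of the linear program $$\text{maximize } \sum_{\mathbf{r}\in\mathcal{V}} f(\mathbf{r})\,x_{\mathbf{r}}\quad\text{subject to}\quad \sum_{\mathbf{r}\in\mathcal{V}} r_j\,x_{\mathbf{r}}=\binom{n}{j}\ (j=0,\dots,n),\qquad x_{\mathbf{r}}\ge 0,$$ where $\mathcal{V}=\{\mathbf{r}\in\mathbb{Z}_{\ge0}^{n+1}:\sum_j r_j=2\}$, $\pi(\mathbf{r})=\sum_{j=0}^n r_jp^jq^{n-j}$ and $f(\mathbf{r})=-\pi(\mathbf{r})\log_2\pi(\mathbf{r})$. In particular this code attains the upper bound $V^*(1,k,p)$ on the equivocation of all binning codes with $2^k$ bins of size $2$.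
   Context: Wiretap model: a message $M$ is uniform on $\{1,\dots,2^k\}$; the encoder maps message $i$ to a codeword $X^n$ chosen uniformly at random from bin $\mathcal{B}_i$, the bins forming a partition of $\{0,1\}^n$ into sets of equal size. The eavesdropper observes $Z^n$, the output of a binary symmetric channel with crossover probability $p$ applied to $X^n$. For an observation $z^n$, $P(x^n\mid z^n)=p^{d_H(x^n,z^n)}q^{n-d_H(x^n,z^n)}$ ($d_H$ = Hamming distance), $P_{\mathcal{B}_i}(z^n)=\sum_{x^n\in\mathcal{B}_i}P(x^n\mid z^n)$, $H(M\mid Z^n=z^n)=-\sum_i P_{\mathcal{B}_i}(z^n)\log_2P_{\mathcal{B}_i}(z^n)$, and $H(M\mid Z^n)=2^{-n}\sum_{z^n}H(M\mid Z^n=z^n)$. Convention $0\log_2 0=0$. *)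

theory Defs
  imports Complex_Main
begin

definition words :: "nat \<Rightarrow> bool list set" where
  "words n = {xs. length xs = n}"

definition hamming :: "bool list \<Rightarrow> bool list \<Rightarrow> nat" where
  "hamming xs ys = card {i. i < length xs \<and> xs ! i \<noteq> ys ! i}"

text \<open>P(x^n | z^n) for the BSC with crossover probability p, q = 1 - p.\<close>
definition bsc_post :: "real \<Rightarrow> nat \<Rightarrow> bool list \<Rightarrow> bool list \<Rightarrow> real" where
  "bsc_post p n x z = p ^ hamming x z * (1 - p) ^ (n - hamming x z)"

definition bin_prob :: "real \<Rightarrow> nat \<Rightarrow> bool list set \<Rightarrow> bool list \<Rightarrow> real" where
  "bin_prob p n B z = (\<Sum>x\<in>B. bsc_post p n x z)"

definition negentr :: "real \<Rightarrow> real" where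
  "negentr t = (if t = 0 then 0 else - t * log 2 t)"

definition equivocation :: "real \<Rightarrow> nat \<Rightarrow> bool list set set \<Rightarrow> real" where
  "equivocation p n bins =
     (1 / 2 ^ n) * (\<Sum>z\<in>words n. \<Sum>B\<in>bins. negentr (bin_prob p n B z))"

definition ni_bins :: "nat \<Rightarrow> bool list set set" where
  "ni_bins n = {{x, map Not x} | x. x \<in> words n}"

text \<open>The LP defining V^*(1,k,p), with n = k+1; vectors r \<in> Z_{\<ge>0}^{n+1}
  are lists of length n+1 indexed 0..n.\<close>
definition lp_V :: "nat \<Rightarrow> nat list set" where
  "lp_V n = {r. length r = n + 1 \<and> sum_list r = 2}"

definition lp_pi :: "real \<Rightarrow> nat \<Rightarrow> nat list \<Rightarrow> real" where
  "lp_pi p n r = (\<Sum>j\<le>n. real (r ! j) * p ^ j * (1 - p) ^ (n - j))"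

definition lp_f :: "real \<Rightarrow> nat \<Rightarrow> nat list \<Rightarrow> real" where
  "lp_f p n r = negentr (lp_pi p n r)"

definition lp_feasible :: "nat \<Rightarrow> (nat list \<Rightarrow> real) \<Rightarrow> bool" where
  "lp_feasible n x \<longleftrightarrow>
     (\<forall>r\<in>lp_V n. x r \<ge> 0) \<and>
     (\<forall>j\<le>n. (\<Sum>r\<in>lp_V n. real (r ! j) * x r) = real (n choose j))"

definition lp_obj :: "real \<Rightarrow> nat \<Rightarrow> (nat list \<Rightarrow> real) \<Rightarrow> real" where
  "lp_obj p n x = (\<Sum>r\<in>lp_V n. lp_f p n r * x r)"

text \<open>Optimal value V^*(1,k,p) (the LP is feasible and bounded).\<close>
definition V_star :: "nat \<Rightarrow> real \<Rightarrow> real" where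
  "V_star k p = Sup (lp_obj p (k + 1) ` {x. lp_feasible (k + 1) x})"

end

theory Submission
  imports Defs
begin

(*
  Write pi_j = p^j q^(n-j).  The bin {x, not x} has posterior mass pi_d + pi_(n-d) with
  d = d_H(x, z), so for every observation z the conditional entropy equals
  N = 1/2 * sum_j C(n,j) eta(pi_j + pi_(n-j)), eta(t) = -t log2 t, and hence so does the
  equivocation.  Weight C(n,j)/2 on the LP point e_j + e_(n-j) is feasible with value N.

  Conversely, pi_j pi_(n-j) = c^2 with c^2 = (pq)^n, so it suffices to find psi with
  eta(u + v) <= psi(u) + psi(v) for all u, v > 0, with equality when u v = c^2: then
  y_j = psi(pi_j) / ln 2 is a dual solution of value N, and weak duality gives V* <= N.
  The choice psi(u) = -u ln(u + c^2/u) + c (pi/2 - 2 arctan(u/c)) works: its derivative is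
  -ln(u + c^2/u) - 1, so u |-> psi(u) + (u + v) ln(u + v) is minimal at u = c^2/v, where
  the arctan terms cancel.  For p in {0, 1} all pi_j are 0 or 1 and y = 0 suffices.
*)

section \<open>A separable majorant of -(u + v) ln (u + v)\<close>

definition pair_majorant :: "real \<Rightarrow> real \<Rightarrow> real" where
  "pair_majorant c u = - u * ln (u + c\<^sup>2 / u) + c * (pi / 2 - 2 * arctan (u / c))"

lemma pair_majorant_has_derivative:
  assumes "c > 0" "u > 0"
  shows "(pair_majorant c has_real_derivative (- ln (u + c\<^sup>2 / u) - 1)) (at u)"
proof -
  have denom_pos: "c\<^sup>2 + u\<^sup>2 > 0"
    using assms by (simp add: add_pos_pos)
  have arctan_term: "inverse (1 + (u / c)\<^sup>2) = c\<^sup>2 / (c\<^sup>2 + u\<^sup>2)"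
    using assms denom_pos by (simp add: field_simps power2_eq_square)
  have "(1 - c\<^sup>2 / (u * u)) * u = (u\<^sup>2 - c\<^sup>2) / u" "u + c\<^sup>2 / u = (c\<^sup>2 + u\<^sup>2) / u"
    using assms by (simp_all add: field_simps power2_eq_square)
  then have ln_term: "(1 - c\<^sup>2 / (u * u)) * u / (u + c\<^sup>2 / u) = (u\<^sup>2 - c\<^sup>2) / (c\<^sup>2 + u\<^sup>2)"
    using assms by simp
  have "- (c\<^sup>2 / (c\<^sup>2 + u\<^sup>2) * 2) - (u\<^sup>2 - c\<^sup>2) / (c\<^sup>2 + u\<^sup>2) = -1"
    using denom_pos assms by (simp add: divide_simps)
  then show ?thesis
    unfolding pair_majorant_def[abs_def] using assms arctan_term ln_term
    by (auto intro!: derivative_eq_intros simp: add_pos_nonneg)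
qed

lemma pair_majorant_add_reciprocal:
  assumes "c > 0" "u > 0"
  shows "pair_majorant c u + pair_majorant c (c\<^sup>2 / u) = - (u + c\<^sup>2 / u) * ln (u + c\<^sup>2 / u)"
proof -
  have "c\<^sup>2 / u / c = inverse (u / c)"
    using assms by (simp add: power2_eq_square field_simps)
  then have arctan_eq: "arctan (c\<^sup>2 / u / c) = pi / 2 - arctan (u / c)"
    using arctan_inverse[of "u / c"] assms by simp
  have "c\<^sup>2 / (c\<^sup>2 / u) = u"
    using assms by simp
  then have "pair_majorant c (c\<^sup>2 / u)
      = - (c\<^sup>2 / u) * ln (c\<^sup>2 / u + u) + c * (pi / 2 - 2 * (pi / 2 - arctan (u / c)))"
    unfolding pair_majorant_def by (simp only: arctan_eq)
  then show ?thesis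
    unfolding pair_majorant_def by (simp add: algebra_simps)
qed

lemma DERIV_sign_change_minimum:
  fixes f f' :: "real \<Rightarrow> real"
  assumes "u0 > 0" "u > 0"
    and deriv: "\<And>x. x > 0 \<Longrightarrow> (f has_real_derivative f' x) (at x)"
    and "\<And>x. x > 0 \<Longrightarrow> x \<le> u0 \<Longrightarrow> f' x \<le> 0"
    and "\<And>x. u0 \<le> x \<Longrightarrow> f' x \<ge> 0"
  shows "f u0 \<le> f u"
proof (cases "u \<le> u0")
  case True
  show ?thesis
  proof (rule DERIV_nonpos_imp_nonincreasing[OF True])
    fix x assume "u \<le> x" "x \<le> u0"
    with assms show "\<exists>y. (f has_real_derivative y) (at x) \<and> y \<le> 0"
      by (meson deriv order_less_le_trans)
  qed
next
  case False
  show ?thesis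
  proof (rule DERIV_nonneg_imp_nondecreasing[of u0 u f])
    show "u0 \<le> u"
      using False by simp
    fix x assume "u0 \<le> x" "x \<le> u"
    with assms show "\<exists>y. (f has_real_derivative y) (at x) \<and> y \<ge> 0"
      by (meson deriv order_less_le_trans)
  qed
qed

lemma entropy_le_pair_majorant_add:
  assumes "c > 0" "u > 0" "v > 0"
  shows "- (u + v) * ln (u + v) \<le> pair_majorant c u + pair_majorant c v"
proof -
  define f where "f x = pair_majorant c x + (x + v) * ln (x + v)" for x
  define u0 where "u0 = c\<^sup>2 / v"
  have "u0 > 0"
    using assms by (simp add: u0_def)
  have f_deriv: "(f has_real_derivative (ln (x + v) - ln (x + c\<^sup>2 / x))) (at x)" if "x > 0" for x
    unfolding f_def[abs_def] using that assms
    by (auto intro!: derivative_eq_intros pair_majorant_has_derivative)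
  have v_le: "v \<le> c\<^sup>2 / x" if "x > 0" "x \<le> u0" for x
    using that assms by (simp add: u0_def field_simps)
  have le_v: "c\<^sup>2 / x \<le> v" if "u0 \<le> x" for x
  proof -
    have "x > 0"
      using that \<open>u0 > 0\<close> by simp
    with that assms show ?thesis
      by (simp add: u0_def field_simps)
  qed
  have "f u0 \<le> f u"
  proof (rule DERIV_sign_change_minimum[OF \<open>u0 > 0\<close> \<open>u > 0\<close> f_deriv])
    fix x
    show "x > 0 \<Longrightarrow> x \<le> u0 \<Longrightarrow> ln (x + v) - ln (x + c\<^sup>2 / x) \<le> 0"
      using v_le[of x] assms by (simp add: ln_mono)
    show "u0 \<le> x \<Longrightarrow> ln (x + v) - ln (x + c\<^sup>2 / x) \<ge> 0"
      using le_v[of x] assms \<open>u0 > 0\<close> by (simp add: ln_mono add_pos_nonneg)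
  qed
  moreover have "f u0 = - pair_majorant c v"
    using pair_majorant_add_reciprocal[OF assms(1) \<open>u0 > 0\<close>] assms
    by (simp add: f_def u0_def algebra_simps)
  ultimately show ?thesis
    unfolding f_def by (simp add: algebra_simps)
qed

section \<open>Hamming distances on binary words\<close>

lemma finite_words: "finite (words n)"
  using finite_lists_length_eq[of "UNIV :: bool set" n] by (simp add: words_def)

lemma card_words: "card (words n) = 2 ^ n"
  using card_lists_length_eq[of "UNIV :: bool set" n] by (simp add: words_def)

lemma words_Suc: "words (Suc n) = Cons True ` words n \<union> Cons False ` words n"
proof
  show "words (Suc n) \<subseteq> Cons True ` words n \<union> Cons False ` words n"
  proof
    fix xs assume "xs \<in> words (Suc n)"
    then obtain a ys where "xs = a # ys" "length ys = n"
      by (auto simp: words_def length_Suc_conv)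
    then show "xs \<in> Cons True ` words n \<union> Cons False ` words n"
      by (cases a) (auto simp: words_def)
  qed
qed (auto simp: words_def)

lemma hamming_Nil [simp]: "hamming [] z = 0"
  by (simp add: hamming_def)

lemma hamming_Cons: "hamming (a # x) (b # z) = (if a = b then 0 else 1) + hamming x z"
proof -
  let ?M = "{i. (a # x) ! i \<noteq> (b # z) ! i}"
  have "hamming x z = card {k. Suc k \<in> ?M \<and> k < length x}"
    unfolding hamming_def by (rule arg_cong[where f = card]) auto
  moreover have "hamming (a # x) (b # z) = card {k \<in> ?M. k < Suc (length x)}"
    unfolding hamming_def by (rule arg_cong[where f = card]) auto
  ultimately show ?thesis
    using card_less_Suc[of ?M] card_less_Suc2[of ?M] by auto
qed

lemma hamming_le_length: "hamming x z \<le> length x"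
proof -
  have "card {i. i < length x \<and> x ! i \<noteq> z ! i} \<le> card {..<length x}"
    by (rule card_mono) auto
  then show ?thesis
    by (simp add: hamming_def)
qed

lemma hamming_map_Not: "length x = length z \<Longrightarrow> hamming (map Not x) z = length x - hamming x z"
proof (induction x arbitrary: z)
  case (Cons a x)
  then obtain b z' where "z = b # z'" "length x = length z'"
    by (cases z) auto
  with Cons.IH hamming_le_length[of x z'] show ?case
    by (simp add: hamming_Cons)
qed simp

lemma sum_choose_Suc:
  fixes h :: "nat \<Rightarrow> 'a::comm_semiring_1"
  shows "(\<Sum>j\<le>Suc n. of_nat (Suc n choose j) * h j)
    = (\<Sum>j\<le>n. of_nat (n choose j) * h j) + (\<Sum>j\<le>n. of_nat (n choose j) * h (Suc j))"
proof -
  have "(\<Sum>j\<le>n. of_nat (n choose j) * h j) = (\<Sum>j\<le>Suc n. of_nat (n choose j) * h j)"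
    by (simp add: binomial_eq_0)
  also have "\<dots> = h 0 + (\<Sum>j\<le>n. of_nat (n choose Suc j) * h (Suc j))"
    by (simp only: sum.atMost_Suc_shift) simp
  finally have "(\<Sum>j\<le>n. of_nat (n choose j) * h j) = h 0 + (\<Sum>j\<le>n. of_nat (n choose Suc j) * h (Suc j))" .
  then show ?thesis
    by (simp only: sum.atMost_Suc_shift) (simp add: sum.distrib algebra_simps)
qed

lemma sum_words_hamming:
  fixes h :: "nat \<Rightarrow> real"
  shows "length z = n \<Longrightarrow> (\<Sum>x\<in>words n. h (hamming x z)) = (\<Sum>j\<le>n. real (n choose j) * h j)"
proof (induction n arbitrary: z h)
  case 0
  then show ?case
    by (simp add: words_def)
next
  case (Suc n)
  then obtain b z' where z: "z = b # z'" "length z' = n"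
    by (cases z) auto
  have "(\<Sum>x\<in>words (Suc n). h (hamming x z))
      = (\<Sum>x\<in>words n. h (hamming (True # x) z)) + (\<Sum>x\<in>words n. h (hamming (False # x) z))"
    unfolding words_Suc by (subst sum.union_disjoint) (auto simp: finite_words sum.reindex)
  also have "\<dots> = (\<Sum>x\<in>words n. h (hamming x z')) + (\<Sum>x\<in>words n. h (Suc (hamming x z')))"
    using z by (cases b) (simp_all add: hamming_Cons)
  also have "\<dots> = (\<Sum>j\<le>Suc n. real (Suc n choose j) * h j)"
    using Suc.IH[OF z(2), of h] Suc.IH[OF z(2), of "\<lambda>j. h (Suc j)"] by (simp only: sum_choose_Suc)
  finally show ?case .
qed

section \<open>Equivocation of the complementary-pair code\<close>

definition bsc_weight :: "real \<Rightarrow> nat \<Rightarrow> nat \<Rightarrow> real" where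
  "bsc_weight p n j = p ^ j * (1 - p) ^ (n - j)"

definition ni_value :: "real \<Rightarrow> nat \<Rightarrow> real" where
  "ni_value p n = (\<Sum>j\<le>n. real (n choose j) * negentr (bsc_weight p n j + bsc_weight p n (n - j))) / 2"

lemma map_Not_neq:
  assumes "xs \<noteq> []"
  shows "map Not xs \<noteq> xs"
  using assms by (cases xs) auto

lemma sum_ni_bins:
  fixes g :: "bool list set \<Rightarrow> real"
  assumes "n \<ge> 1"
  shows "(\<Sum>B\<in>ni_bins n. g B) = (\<Sum>x\<in>words n. g {x, map Not x}) / 2"
proof -
  define pair where "pair x = {x, map Not x}" for x :: "bool list"
  have bins: "ni_bins n = pair ` words n"
    by (auto simp: ni_bins_def pair_def)
  have fiber: "{y \<in> words n. pair y = pair x} = {x, map Not x}" if "x \<in> words n" for x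
    using that by (auto simp: pair_def words_def doubleton_eq_iff comp_def)
  have "(\<Sum>x\<in>words n. g (pair x)) = (\<Sum>B\<in>pair ` words n. \<Sum>x\<in>{y \<in> words n. pair y = B}. g (pair x))"
    by (rule sum.image_gen[OF finite_words])
  also have "\<dots> = (\<Sum>B\<in>pair ` words n. 2 * g B)"
  proof (rule sum.cong)
    fix B assume "B \<in> pair ` words n"
    then obtain x where x: "x \<in> words n" "B = pair x"
      by blast
    moreover have "map Not x \<noteq> x"
      using x assms by (intro map_Not_neq) (auto simp: words_def)
    moreover have "pair (map Not x) = pair x"
      by (auto simp: pair_def comp_def)
    ultimately show "(\<Sum>y\<in>{y \<in> words n. pair y = B}. g (pair y)) = 2 * g B"
      using fiber[OF x(1)] by auto
  qed simp
  finally show ?thesis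
    by (simp add: bins pair_def sum_distrib_left mult.commute)
qed

lemma bin_prob_complement_pair:
  assumes "n \<ge> 1" "x \<in> words n" "z \<in> words n"
  shows "bin_prob p n {x, map Not x} z = bsc_weight p n (hamming x z) + bsc_weight p n (n - hamming x z)"
proof -
  have "map Not x \<noteq> x"
    using assms by (intro map_Not_neq) (auto simp: words_def)
  moreover have "hamming (map Not x) z = n - hamming x z"
    using assms by (simp add: hamming_map_Not words_def)
  ultimately show ?thesis
    by (simp add: bin_prob_def bsc_post_def bsc_weight_def)
qed

lemma equivocation_ni_bins:
  assumes "n \<ge> 1"
  shows "equivocation p n (ni_bins n) = ni_value p n"
proof -
  have per_observation: "(\<Sum>B\<in>ni_bins n. negentr (bin_prob p n B z)) = ni_value p n"
    if z: "z \<in> words n" for z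
  proof -
    have "(\<Sum>B\<in>ni_bins n. negentr (bin_prob p n B z))
        = (\<Sum>x\<in>words n. negentr (bsc_weight p n (hamming x z) + bsc_weight p n (n - hamming x z))) / 2"
      using assms z by (simp add: sum_ni_bins bin_prob_complement_pair)
    also have "\<dots> = ni_value p n"
      using z sum_words_hamming[of z n "\<lambda>d. negentr (bsc_weight p n d + bsc_weight p n (n - d))"]
      by (simp add: words_def ni_value_def)
    finally show ?thesis .
  qed
  then show ?thesis
    by (simp add: equivocation_def card_words)
qed

section \<open>The linear program\<close>

lemma finite_lp_V: "finite (lp_V n)"
proof (rule finite_subset)
  show "lp_V n \<subseteq> {xs. set xs \<subseteq> {0..2} \<and> length xs = n + 1}"
    using member_le_sum_list by (fastforce simp: lp_V_def)
  show "finite {xs. set xs \<subseteq> {0..2::nat} \<and> length xs = n + 1}"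
    by (rule finite_lists_length_eq) simp
qed

lemma lp_V_two_indices:
  assumes "r \<in> lp_V n"
  obtains a b where "a \<le> n" "b \<le> n"
    "\<And>g :: nat \<Rightarrow> real. (\<Sum>j\<le>n. real (r ! j) * g j) = g a + g b"
proof -
  have r: "length r = Suc n" "sum_list r = 2"
    using assms by (auto simp: lp_V_def)
  define xs where "xs = concat (map (\<lambda>j. replicate (r ! j) j) [0..<Suc n])"
  have "map length (map (\<lambda>j. replicate (r ! j) j) [0..<Suc n]) = r"
    by (rule nth_equalityI) (simp_all add: r(1) del: upt_Suc)
  then have "length xs = 2"
    unfolding xs_def length_concat using r(2) by simp
  then obtain a b where ab: "xs = [a, b]"
    by (auto simp: numeral_2_eq_2 length_Suc_conv)
  have "set xs \<subseteq> {..n}"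
    by (auto simp: xs_def)
  moreover have "(\<Sum>j\<le>n. real (r ! j) * g j) = sum_list (map g xs)" for g :: "nat \<Rightarrow> real"
  proof -
    have sum_list_concat: "sum_list (concat L) = sum_list (map sum_list L)" for L :: "real list list"
      by (induct L) simp_all
    show ?thesis
      by (simp add: xs_def map_concat sum_list_concat comp_def sum_list_replicate
          interv_sum_list_conv_sum_set_nat atLeast0LessThan lessThan_Suc_atMost del: upt_Suc)
  qed
  ultimately show ?thesis
    using that[of a b] ab by simp
qed

lemma lp_pi_eq_bsc_weight: "lp_pi p n r = (\<Sum>j\<le>n. real (r ! j) * bsc_weight p n j)"
  by (simp add: lp_pi_def bsc_weight_def mult.assoc)

lemma negentr_eq_ln: "t > 0 \<Longrightarrow> negentr t = - t * ln t / ln 2"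
  by (simp add: negentr_def log_def)

lemma lp_obj_le_dual:
  assumes x: "lp_feasible n x"
    and y: "\<And>r. r \<in> lp_V n \<Longrightarrow> lp_f p n r \<le> (\<Sum>j\<le>n. real (r ! j) * y j)"
  shows "lp_obj p n x \<le> (\<Sum>j\<le>n. real (n choose j) * y j)"
proof -
  have "lp_obj p n x \<le> (\<Sum>r\<in>lp_V n. (\<Sum>j\<le>n. real (r ! j) * y j) * x r)"
    unfolding lp_obj_def
    using x y by (intro sum_mono mult_right_mono) (auto simp: lp_feasible_def)
  also have "\<dots> = (\<Sum>j\<le>n. y j * (\<Sum>r\<in>lp_V n. real (r ! j) * x r))"
    by (simp add: sum_distrib_left sum_distrib_right mult_ac sum.swap[of _ "lp_V n"])
  also have "\<dots> = (\<Sum>j\<le>n. real (n choose j) * y j)"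
    using x by (simp add: lp_feasible_def mult.commute)
  finally show ?thesis .
qed

lemma sum_choose_reflect:
  fixes y g :: "nat \<Rightarrow> real"
  assumes "\<And>j. j \<le> n \<Longrightarrow> y j + y (n - j) = g j"
  shows "(\<Sum>j\<le>n. real (n choose j) * y j) = (\<Sum>j\<le>n. real (n choose j) * g j) / 2"
proof -
  have "(\<Sum>j\<le>n. real (n choose j) * y j) = (\<Sum>j\<le>n. real (n choose (n - j)) * y (n - j))"
    using sum.atLeastAtMost_rev[of "\<lambda>j. real (n choose j) * y j" 0 n] by (simp add: atLeast0AtMost)
  also have "\<dots> = (\<Sum>j\<le>n. real (n choose j) * y (n - j))"
    by (intro sum.cong) (auto simp: binomial_symmetric[symmetric])
  finally have "2 * (\<Sum>j\<le>n. real (n choose j) * y j) = (\<Sum>j\<le>n. real (n choose j) * (y j + y (n - j)))"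
    by (simp add: sum.distrib distrib_left)
  also have "\<dots> = (\<Sum>j\<le>n. real (n choose j) * g j)"
    using assms by simp
  finally show ?thesis
    by simp
qed

lemma bsc_weight_degenerate: "p = 0 \<or> p = 1 \<Longrightarrow> bsc_weight p n j \<in> {0, 1}"
  by (auto simp: bsc_weight_def power_0_left split: if_splits)

lemma bsc_weight_mult_reflect:
  assumes "j \<le> n"
  shows "bsc_weight p n j * bsc_weight p n (n - j) = (p * (1 - p)) ^ n"
proof -
  have "bsc_weight p n j * bsc_weight p n (n - j) = (p ^ j * p ^ (n - j)) * ((1 - p) ^ j * (1 - p) ^ (n - j))"
    using assms by (simp add: bsc_weight_def mult_ac)
  also have "\<dots> = (p * (1 - p)) ^ n"
    using assms by (simp add: power_mult_distrib flip: power_add)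
  finally show ?thesis .
qed

lemma ni_dual_certificate:
  assumes "n \<ge> 1" "0 \<le> p" "p \<le> 1"
  obtains y where "\<And>r. r \<in> lp_V n \<Longrightarrow> lp_f p n r \<le> (\<Sum>j\<le>n. real (r ! j) * y j)"
    "\<And>j. j \<le> n \<Longrightarrow> y j + y (n - j) = negentr (bsc_weight p n j + bsc_weight p n (n - j))"
proof (cases "p = 0 \<or> p = 1")
  case True
  then have weight_01: "bsc_weight p n j \<in> {0, 1}" for j
    by (rule bsc_weight_degenerate)
  have "lp_f p n r \<le> 0" if r: "r \<in> lp_V n" for r
  proof -
    obtain a b where "\<And>g :: nat \<Rightarrow> real. (\<Sum>j\<le>n. real (r ! j) * g j) = g a + g b"
      using lp_V_two_indices[OF r] by blast
    then have "lp_pi p n r = bsc_weight p n a + bsc_weight p n b"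
      by (simp add: lp_pi_eq_bsc_weight)
    then show ?thesis
      using weight_01[of a] weight_01[of b] by (auto simp: lp_f_def negentr_def)
  qed
  moreover have "negentr (bsc_weight p n j + bsc_weight p n (n - j)) = 0" if "j \<le> n" for j
    using True that assms(1) by (auto simp: bsc_weight_def negentr_def power_0_left)
  ultimately show ?thesis
    by (intro that[of "\<lambda>_. 0"]) auto
next
  case False
  with assms have p: "0 < p" "p < 1"
    by auto
  define c where "c = sqrt ((p * (1 - p)) ^ n)"
  have "c > 0"
    using p by (simp add: c_def)
  have weight_pos: "bsc_weight p n j > 0" for j
    using p by (simp add: bsc_weight_def)
  have weight_reflect: "bsc_weight p n (n - j) = c\<^sup>2 / bsc_weight p n j" if "j \<le> n" for j
    using bsc_weight_mult_reflect[OF that, of p] weight_pos[of j] p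
    by (simp add: c_def field_simps)
  define y where "y j = pair_majorant c (bsc_weight p n j) / ln 2" for j
  show ?thesis
  proof (rule that)
    fix r assume "r \<in> lp_V n"
    then obtain a b where ab: "\<And>g :: nat \<Rightarrow> real. (\<Sum>j\<le>n. real (r ! j) * g j) = g a + g b"
      using lp_V_two_indices by blast
    then have "lp_f p n r = negentr (bsc_weight p n a + bsc_weight p n b)"
      by (simp add: lp_f_def lp_pi_eq_bsc_weight)
    also have "\<dots> \<le> y a + y b"
      using entropy_le_pair_majorant_add[OF \<open>c > 0\<close> weight_pos weight_pos]
      by (simp add: negentr_eq_ln weight_pos add_pos_pos y_def divide_right_mono flip: add_divide_distrib)
    finally show "lp_f p n r \<le> (\<Sum>j\<le>n. real (r ! j) * y j)"
      by (simp add: ab)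
  next
    fix j assume "j \<le> n"
    then show "y j + y (n - j) = negentr (bsc_weight p n j + bsc_weight p n (n - j))"
      using pair_majorant_add_reciprocal[OF \<open>c > 0\<close> weight_pos[of j]] weight_pos[of j] \<open>c > 0\<close>
      by (simp add: y_def weight_reflect negentr_eq_ln add_pos_pos flip: add_divide_distrib)
  qed
qed

lemma lp_obj_le_ni_value:
  assumes "n \<ge> 1" "0 \<le> p" "p \<le> 1" "lp_feasible n x"
  shows "lp_obj p n x \<le> ni_value p n"
proof -
  obtain y where y: "\<And>r. r \<in> lp_V n \<Longrightarrow> lp_f p n r \<le> (\<Sum>j\<le>n. real (r ! j) * y j)"
    "\<And>j. j \<le> n \<Longrightarrow> y j + y (n - j) = negentr (bsc_weight p n j + bsc_weight p n (n - j))"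
    using ni_dual_certificate[OF assms(1-3)] by blast
  have "lp_obj p n x \<le> (\<Sum>j\<le>n. real (n choose j) * y j)"
    using lp_obj_le_dual[OF assms(4) y(1)] .
  also have "\<dots> = ni_value p n"
    unfolding ni_value_def using y(2) by (rule sum_choose_reflect)
  finally show ?thesis .
qed

definition complement_pair_vec :: "nat \<Rightarrow> nat \<Rightarrow> nat list" where
  "complement_pair_vec n j = map (\<lambda>i. of_bool (i = j) + of_bool (i = n - j)) [0..<Suc n]"

lemma sum_complement_pair_vec:
  fixes g :: "nat \<Rightarrow> real"
  assumes "j \<le> n"
  shows "(\<Sum>i\<le>n. real (complement_pair_vec n j ! i) * g i) = g j + g (n - j)"
proof -
  have "(\<Sum>i\<le>n. real (complement_pair_vec n j ! i) * g i)
      = (\<Sum>i\<le>n. of_bool (i = j) * g i + of_bool (i = n - j) * g i)"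
    by (intro sum.cong) (auto simp: complement_pair_vec_def nth_append simp del: upt_Suc)
  also have "\<dots> = g j + g (n - j)"
    using assms by (simp add: sum.distrib)
  finally show ?thesis .
qed

lemma complement_pair_vec_in_lp_V:
  assumes "j \<le> n"
  shows "complement_pair_vec n j \<in> lp_V n"
proof -
  have "real (sum_list (complement_pair_vec n j)) = (\<Sum>i\<le>n. real (complement_pair_vec n j ! i) * 1)"
    by (simp add: sum_list_sum_nth complement_pair_vec_def atLeast0LessThan lessThan_Suc_atMost
        del: upt_Suc)
  also have "\<dots> = 2"
    using sum_complement_pair_vec[OF assms, of "\<lambda>_. 1"] by simp
  finally have "sum_list (complement_pair_vec n j) = 2"
    by linarith
  moreover have "length (complement_pair_vec n j) = n + 1"
    by (simp add: complement_pair_vec_def)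
  ultimately show ?thesis
    by (simp add: lp_V_def)
qed

definition ni_lp_point :: "nat \<Rightarrow> nat list \<Rightarrow> real" where
  "ni_lp_point n r = (\<Sum>j\<le>n. if r = complement_pair_vec n j then real (n choose j) else 0) / 2"

lemma sum_lp_V_ni_lp_point:
  "(\<Sum>r\<in>lp_V n. g r * ni_lp_point n r) = (\<Sum>j\<le>n. real (n choose j) * g (complement_pair_vec n j)) / 2"
proof -
  have "(\<Sum>r\<in>lp_V n. g r * ni_lp_point n r)
      = (\<Sum>r\<in>lp_V n. \<Sum>j\<le>n. if r = complement_pair_vec n j then real (n choose j) * g r else 0) / 2"
    by (auto simp: ni_lp_point_def sum_distrib_left sum_divide_distrib intro!: sum.cong)
  also have "\<dots> = (\<Sum>j\<le>n. \<Sum>r\<in>lp_V n. if r = complement_pair_vec n j then real (n choose j) * g r else 0) / 2"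
    by (subst sum.swap) (rule refl)
  also have "\<dots> = (\<Sum>j\<le>n. real (n choose j) * g (complement_pair_vec n j)) / 2"
    by (simp add: finite_lp_V complement_pair_vec_in_lp_V)
  finally show ?thesis .
qed

lemma lp_feasible_ni_lp_point: "lp_feasible n (ni_lp_point n)"
  unfolding lp_feasible_def
proof (intro conjI ballI allI impI)
  fix r show "ni_lp_point n r \<ge> 0"
    by (simp add: ni_lp_point_def sum_nonneg)
next
  fix i assume "i \<le> n"
  have "(\<Sum>r\<in>lp_V n. real (r ! i) * ni_lp_point n r)
      = (\<Sum>j\<le>n. real (n choose j) * (of_bool (j = i) + of_bool (j = n - i))) / 2"
    unfolding sum_lp_V_ni_lp_point using \<open>i \<le> n\<close>
    by (intro arg_cong[where f = "\<lambda>t. t / 2"] sum.cong)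
      (auto simp: complement_pair_vec_def nth_append simp del: upt_Suc)
  also have "\<dots> = real (n choose i)"
    using \<open>i \<le> n\<close> by (simp add: distrib_left sum.distrib binomial_symmetric[symmetric])
  finally show "(\<Sum>r\<in>lp_V n. real (r ! i) * ni_lp_point n r) = real (n choose i)" .
qed

lemma lp_obj_ni_lp_point: "lp_obj p n (ni_lp_point n) = ni_value p n"
  unfolding lp_obj_def sum_lp_V_ni_lp_point ni_value_def lp_f_def
  by (intro arg_cong[where f = "\<lambda>t. t / 2"] sum.cong)
    (simp_all add: lp_pi_eq_bsc_weight sum_complement_pair_vec)

lemma V_star_eq_ni_value:
  assumes "0 \<le> p" "p \<le> 1"
  shows "V_star k p = ni_value p (k + 1)"
  unfolding V_star_def
proof (rule cSup_eq_maximum)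
  show "ni_value p (k + 1) \<in> lp_obj p (k + 1) ` {x. lp_feasible (k + 1) x}"
    using lp_feasible_ni_lp_point lp_obj_ni_lp_point by (metis image_eqI mem_Collect_eq)
  fix t assume "t \<in> lp_obj p (k + 1) ` {x. lp_feasible (k + 1) x}"
  then show "t \<le> ni_value p (k + 1)"
    using lp_obj_le_ni_value assms by auto
qed

theorem lemma2:
  fixes k :: nat and p :: real
  assumes "k \<ge> 1" and "0 \<le> p" and "p \<le> 1"
  shows "equivocation p (k + 1) (ni_bins (k + 1)) = V_star k p"
  using equivocation_ni_bins[of "k + 1" p] V_star_eq_ni_value[OF assms(2,3)] by simp

end
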